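(* Let $n\ge 2$, let $\epsilon\in(0,1)$, let $Q^0$ be a probability distribution on $n$ categories with $Q^0_i>0$ for all $i$, and let $\widehat{P}$ be a fixed probability vector in $\mathbb{S}^n$ (not varying with $p$). Take $\mathcal{Q}=\{Q^0\}$, and for each $p$ let $\alpha_{\mathrm{L}}=\alpha_{\mathrm{L}}(p)$ be as defined below. Then, as $p\to\infty$, $$\kappa(\widehat{P}\,\|\,Q^0)-\alpha_{\mathrm{L}}=O\left(\sqrt{\frac{\log p}{p}}\right).$$
   Context: $\mathbb{S}^n=\{P\in\mathbb{R}^n:\sum_iP_i=1,\ P_i\ge0\}$. $D(P\|Q)=\sum_iP_i\log(P_i/Q_i)$. The separation distance is $\kappa(P\|Q)=\max_{i\in[n]}\left(1-\frac{P_i}{Q_i}\right)$. For $\alpha\in[0,1]$ let $\mathcal{P}(\widehat{P},\alpha)=\{P\in\mathbb{S}^n: P_i\le \widehat{P}_i/(1-\alpha),\ i=1,\dots,n\}$ (the set of distributions obtainable by discarding a fraction $\alpha$ of the mass of $\widehat{P}$), and let $D^*_\alpha=\min_{P\in\mathcal{P}(\widehat{P},\alpha),\,Q\in\mathcal{Q}}D(P\|Q)$, which for $\mathcal{Q}=\{Q^0\}$ is $\min_{P\in\mathcal{P}(\widehat{P},\alpha)}D(P\|Q^0)$. Define $$\alpha_{\mathrm{L}}=\max\left\{\alpha:\ D^*_\alpha\ \ge\ \frac{1}{p(1-\alpha)}\log\left(\frac1\epsilon\right)+\frac{2n}{p(1-\alpha)}\log\big(p(1-\alpha)+1\big)\right\}.$$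 *)

theory Defs
  imports Complex_Main "HOL-Library.Landau_Symbols" "HOL-Library.Cardinality"
begin

definition simplex :: "('n::finite \<Rightarrow> real) set" where
  "simplex = {P. (\<forall>i. 0 \<le> P i) \<and> (\<Sum>i\<in>UNIV. P i) = 1}"

text \<open>KL divergence (natural log; 0 * ln 0 = 0 holds automatically).\<close>
definition KL :: "('n::finite \<Rightarrow> real) \<Rightarrow> ('n \<Rightarrow> real) \<Rightarrow> real" where
  "KL P Q = (\<Sum>i\<in>UNIV. P i * ln (P i / Q i))"

definition sep_dist :: "('n::finite \<Rightarrow> real) \<Rightarrow> ('n \<Rightarrow> real) \<Rightarrow> real" where
  "sep_dist P Q = Max (range (\<lambda>i. 1 - P i / Q i))"

text \<open>Distributions obtainable by discarding a fraction alpha of the mass of Phat.\<close>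
definition trimmed :: "('n::finite \<Rightarrow> real) \<Rightarrow> real \<Rightarrow> ('n \<Rightarrow> real) set" where
  "trimmed Phat \<alpha> = {P \<in> simplex. \<forall>i. P i \<le> Phat i / (1 - \<alpha>)}"

definition Dstar :: "('n::finite \<Rightarrow> real) \<Rightarrow> ('n \<Rightarrow> real) \<Rightarrow> real \<Rightarrow> real" where
  "Dstar Phat Q0 \<alpha> = Inf ((\<lambda>P. KL P Q0) ` trimmed Phat \<alpha>)"

text \<open>alpha_L; alpha ranges over [0,1) (at alpha = 1 the threshold is +infinity);
  convention alpha_L = 0 if no alpha qualifies.\<close>
definition alpha_L :: "nat \<Rightarrow> real \<Rightarrow> real \<Rightarrow> ('n::finite \<Rightarrow> real) \<Rightarrow> ('n \<Rightarrow> real) \<Rightarrow> real" where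
  "alpha_L n \<epsilon> p Phat Q0 = Sup ({0} \<union> {\<alpha> \<in> {0..<1}.
      Dstar Phat Q0 \<alpha> \<ge> 1 / (p * (1 - \<alpha>)) * ln (1 / \<epsilon>)
        + 2 * real n / (p * (1 - \<alpha>)) * ln (p * (1 - \<alpha>) + 1)})"

end

theory Submission
  imports Defs
begin

text \<open>Write \<open>\<kappa> = 1 - Phat i / Q0 i\<close> for a coordinate \<open>i\<close> realising the separation distance.
  Trimming by \<open>\<alpha> \<ge> \<kappa>\<close> leaves \<open>Q0\<close> itself admissible, so \<open>D\<^sup>*\<^sub>\<alpha> = 0\<close> and \<open>\<alpha>\<^sub>L \<le> \<kappa>\<close>.
  For \<open>\<alpha> = \<kappa> - \<delta>\<close> every admissible \<open>P\<close> has \<open>P i / Q0 i \<le> 1 - \<delta>/(1 - \<alpha>)\<close>, and the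
  quadratic lower bound \<open>(1 - r)\<^sup>2/2 \<le> r ln r - r + 1\<close> of the KL integrand gives
  \<open>D\<^sup>*\<^sub>\<alpha> \<ge> Q0 i \<delta>\<^sup>2/(2(1 - \<alpha>))\<close>. The threshold in \<open>\<alpha>\<^sub>L\<close> is \<open>O(ln p/(p(1 - \<alpha>)))\<close>, so
  \<open>\<delta>\<close> of order \<open>sqrt (ln p / p)\<close> already makes \<open>\<kappa> - \<delta>\<close> admissible.\<close>

definition kl_fun :: "real \<Rightarrow> real" where
  "kl_fun r = r * ln r - r + 1"

lemma kl_fun_nonneg:
  assumes "0 \<le> r"
  shows "0 \<le> kl_fun r"
proof (cases "r = 0")
  case False
  with assms have r: "0 < r" by simp
  have "ln (1/r) \<le> 1/r - 1" using r by (intro ln_le_minus_one) simp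
  hence "r * (- ln r) \<le> r * (1/r - 1)" using r by (intro mult_left_mono) (auto simp: ln_div)
  moreover have "r * (1/r - 1) = 1 - r" using r by (simp add: field_simps)
  ultimately show ?thesis by (simp add: kl_fun_def)
qed (simp add: kl_fun_def)

text \<open>The difference has derivative \<open>ln r + 1 - r \<le> 0\<close> and vanishes at \<open>r = 1\<close>.\<close>
lemma kl_fun_ge_half_sq:
  assumes "0 \<le> r" "r \<le> 1"
  shows "(1 - r)\<^sup>2 / 2 \<le> kl_fun r"
proof (cases "r = 0")
  case False
  with assms have r: "0 < r" by simp
  let ?g = "\<lambda>x::real. x * ln x - x + 1 - (1 - x)\<^sup>2 / 2"
  have "?g 1 \<le> ?g r"
  proof (rule DERIV_nonpos_imp_decreasing_open[OF assms(2)])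
    fix x :: real assume x: "r < x" "x < 1"
    with r have "DERIV ?g x :> ln x + 1 - x"
      by (auto intro!: derivative_eq_intros simp: field_simps power2_eq_square)
    moreover have "ln x + 1 - x \<le> 0" using ln_le_minus_one[of x] x r by simp
    ultimately show "\<exists>y. DERIV ?g x :> y \<and> y \<le> 0" by blast
  next
    show "continuous_on {r..1} ?g" using r by (auto intro!: continuous_intros)
  qed
  thus ?thesis by (simp add: kl_fun_def)
qed (simp add: kl_fun_def)

lemma KL_eq_sum_kl_fun:
  assumes "P \<in> simplex" "Q \<in> simplex" "\<forall>i. Q i > 0"
  shows "KL P Q = (\<Sum>i\<in>UNIV. Q i * kl_fun (P i / Q i))"
proof -
  have "(\<Sum>i\<in>UNIV. Q i * kl_fun (P i / Q i)) = (\<Sum>i\<in>UNIV. P i * ln (P i / Q i) - P i + Q i)"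
    using assms(3) by (intro sum.cong) (auto simp: kl_fun_def field_simps less_imp_neq[symmetric])
  also have "\<dots> = KL P Q - (\<Sum>i\<in>UNIV. P i) + (\<Sum>i\<in>UNIV. Q i)"
    by (simp add: sum.distrib sum_subtractf KL_def)
  finally show ?thesis using assms(1,2) by (simp add: simplex_def)
qed

lemma KL_ge_coordinate:
  assumes "P \<in> simplex" "Q \<in> simplex" "\<forall>i. Q i > 0"
  shows "Q j * kl_fun (P j / Q j) \<le> KL P Q"
proof -
  have "\<And>i. 0 \<le> Q i * kl_fun (P i / Q i)"
    using assms by (intro mult_nonneg_nonneg kl_fun_nonneg) (auto simp: simplex_def less_imp_le)
  hence "Q j * kl_fun (P j / Q j) \<le> (\<Sum>i\<in>UNIV. Q i * kl_fun (P i / Q i))"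
    by (intro member_le_sum) auto
  thus ?thesis using KL_eq_sum_kl_fun[OF assms] by simp
qed

lemma KL_nonneg:
  assumes "P \<in> simplex" "Q \<in> simplex" "\<forall>i. Q i > 0"
  shows "0 \<le> KL P Q"
proof -
  have "0 \<le> Q j * kl_fun (P j / Q j)" for j
    using assms by (intro mult_nonneg_nonneg kl_fun_nonneg) (auto simp: simplex_def less_imp_le)
  with KL_ge_coordinate[OF assms] show ?thesis by (meson order_trans)
qed

lemma KL_self:
  assumes "\<forall>i. Q i > 0"
  shows "KL Q Q = 0"
  using assms by (simp add: KL_def less_imp_neq[symmetric])

lemma sep_dist_ge: "1 - P i / Q i \<le> sep_dist P Q"
  unfolding sep_dist_def by (rule Max_ge) auto

lemma sep_dist_attained:
  obtains i where "sep_dist P Q = 1 - P i / Q i"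
proof -
  have "sep_dist P Q \<in> range (\<lambda>i. 1 - P i / Q i)"
    unfolding sep_dist_def by (rule Max_in) auto
  thus ?thesis using that by blast
qed

lemma sep_dist_le_one:
  assumes "P \<in> simplex" "\<forall>i. Q i > 0"
  shows "sep_dist P Q \<le> 1"
proof -
  obtain i where "sep_dist P Q = 1 - P i / Q i" by (rule sep_dist_attained)
  with assms show ?thesis by (simp add: simplex_def less_imp_le)
qed

lemma sep_dist_nonneg:
  assumes "P \<in> simplex" "Q \<in> simplex" "\<forall>i. Q i > 0"
  shows "0 \<le> sep_dist P Q"
proof (rule ccontr)
  assume "\<not> 0 \<le> sep_dist P Q"
  hence "1 - P i / Q i < 0" for i using sep_dist_ge[of P i Q] by linarith
  hence "Q i < P i" for i using assms(3) less_divide_eq_1_pos[of "Q i" "P i"] by simp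
  hence "(\<Sum>i\<in>UNIV. Q i) < (\<Sum>i\<in>UNIV. P i)" by (intro sum_strict_mono) auto
  with assms(1,2) show False by (simp add: simplex_def)
qed

lemma self_in_trimmed:
  assumes "P \<in> simplex" "0 \<le> \<alpha>" "\<alpha> < 1"
  shows "P \<in> trimmed P \<alpha>"
proof -
  have "P i \<le> P i / (1 - \<alpha>)" for i
  proof -
    have "P i * (1 - \<alpha>) \<le> P i" using assms by (intro mult_left_le) (auto simp: simplex_def)
    with assms(3) show ?thesis by (simp add: le_divide_eq)
  qed
  with assms(1) show ?thesis by (simp add: trimmed_def)
qed

lemma in_trimmed_if_sep_dist_le:
  assumes "Q \<in> simplex" "\<forall>i. Q i > 0" "sep_dist P Q \<le> \<alpha>" "\<alpha> < 1"
  shows "Q \<in> trimmed P \<alpha>"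
proof -
  have "Q i \<le> P i / (1 - \<alpha>)" for i
  proof -
    have "1 - \<alpha> \<le> P i / Q i" using sep_dist_ge[of P i Q] assms(3) by linarith
    with assms(2,4) show ?thesis by (simp add: le_divide_eq mult.commute)
  qed
  with assms(1) show ?thesis by (simp add: trimmed_def)
qed

lemma bdd_below_KL_trimmed:
  assumes "Q0 \<in> simplex" "\<forall>i. Q0 i > 0"
  shows "bdd_below ((\<lambda>P. KL P Q0) ` trimmed Phat \<alpha>)"
  using assms by (intro bdd_belowI[of _ 0]) (auto simp: trimmed_def KL_nonneg)

lemma Dstar_eq_0:
  assumes "Q0 \<in> simplex" "\<forall>i. Q0 i > 0" "sep_dist Phat Q0 \<le> \<alpha>" "\<alpha> < 1"
  shows "Dstar Phat Q0 \<alpha> = 0"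
proof -
  have "Q0 \<in> trimmed Phat \<alpha>" by (rule in_trimmed_if_sep_dist_le[OF assms])
  hence "Dstar Phat Q0 \<alpha> \<le> 0" unfolding Dstar_def
    using cInf_lower[OF _ bdd_below_KL_trimmed[OF assms(1,2)]] KL_self[OF assms(2)]
    by (metis image_eqI)
  moreover have "0 \<le> Dstar Phat Q0 \<alpha>" unfolding Dstar_def
    using \<open>Q0 \<in> trimmed Phat \<alpha>\<close> assms(1,2)
    by (intro cInf_greatest) (auto simp: trimmed_def KL_nonneg)
  ultimately show ?thesis by simp
qed

text \<open>Trimming caps \<open>P i / Q0 i\<close> at \<open>(1 - \<kappa>\<^sub>i)/(1 - \<alpha>)\<close>, where \<open>\<kappa>\<^sub>i = 1 - Phat i / Q0 i\<close>.\<close>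
lemma KL_trimmed_ge:
  assumes "P \<in> trimmed Phat \<alpha>" "Q0 \<in> simplex" "\<forall>i. Q0 i > 0"
    and "\<alpha> < 1" "\<alpha> \<le> 1 - Phat i / Q0 i"
  shows "Q0 i * (1 - Phat i / Q0 i - \<alpha>)\<^sup>2 / (2 * (1 - \<alpha>)\<^sup>2) \<le> KL P Q0"
proof -
  define r where "r = P i / Q0 i"
  have P: "P \<in> simplex" "P i \<le> Phat i / (1 - \<alpha>)" using assms(1) by (auto simp: trimmed_def)
  have q: "0 < Q0 i" using assms(3) by simp
  have r0: "0 \<le> r" using P q by (simp add: r_def simplex_def)
  have "r \<le> Phat i / (1 - \<alpha>) / Q0 i"
    unfolding r_def using P(2) q by (intro divide_right_mono) auto
  hence "r \<le> (Phat i / Q0 i) / (1 - \<alpha>)" by (simp add: mult.commute)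
  moreover have "(1 - c - \<alpha>) / (1 - \<alpha>) = 1 - c / (1 - \<alpha>)" for c
    using assms(4) by (simp add: field_simps)
  ultimately have gap: "(1 - Phat i / Q0 i - \<alpha>) / (1 - \<alpha>) \<le> 1 - r" by simp
  moreover have gap_nonneg: "0 \<le> (1 - Phat i / Q0 i - \<alpha>) / (1 - \<alpha>)" using assms(4,5) by simp
  ultimately have "((1 - Phat i / Q0 i - \<alpha>) / (1 - \<alpha>))\<^sup>2 \<le> (1 - r)\<^sup>2"
    by (rule power_mono)
  also have "\<dots> \<le> 2 * kl_fun r"
    using kl_fun_ge_half_sq[of r] r0 gap gap_nonneg by linarith
  finally have "Q0 i * ((1 - Phat i / Q0 i - \<alpha>) / (1 - \<alpha>))\<^sup>2 / 2 \<le> Q0 i * kl_fun r"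
    using q by simp
  also have "\<dots> \<le> KL P Q0" unfolding r_def by (rule KL_ge_coordinate[OF P(1) assms(2,3)])
  finally show ?thesis by (simp add: power_divide)
qed

lemma Dstar_ge:
  assumes "Phat \<in> simplex" "Q0 \<in> simplex" "\<forall>i. Q0 i > 0"
    and "0 \<le> \<alpha>" "\<alpha> < 1" "\<alpha> \<le> 1 - Phat i / Q0 i"
  shows "Q0 i * (1 - Phat i / Q0 i - \<alpha>)\<^sup>2 / (2 * (1 - \<alpha>)\<^sup>2) \<le> Dstar Phat Q0 \<alpha>"
  unfolding Dstar_def using self_in_trimmed[OF assms(1,4,5)]
  by (intro cInf_greatest) (use KL_trimmed_ge[where i = i] assms in auto)

definition alpha_L_threshold :: "nat \<Rightarrow> real \<Rightarrow> real \<Rightarrow> real \<Rightarrow> real" where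
  "alpha_L_threshold n \<epsilon> p \<alpha> =
     1 / (p * (1 - \<alpha>)) * ln (1 / \<epsilon>) + 2 * real n / (p * (1 - \<alpha>)) * ln (p * (1 - \<alpha>) + 1)"

lemma alpha_L_threshold_pos:
  assumes "0 < p" "\<alpha> < 1" "0 < \<epsilon>" "\<epsilon> < 1"
  shows "0 < alpha_L_threshold n \<epsilon> p \<alpha>"
proof -
  have "0 < 1 / (p * (1 - \<alpha>)) * ln (1 / \<epsilon>)" using assms by simp
  moreover have "0 \<le> 2 * real n / (p * (1 - \<alpha>)) * ln (p * (1 - \<alpha>) + 1)" using assms by simp
  ultimately show ?thesis unfolding alpha_L_threshold_def by linarith
qed

lemma alpha_L_threshold_le:
  assumes "2 \<le> p" "1 / \<epsilon> \<le> p" "0 < \<epsilon>" "0 \<le> \<alpha>" "\<alpha> < 1"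
  shows "alpha_L_threshold n \<epsilon> p \<alpha> \<le> (1 + 4 * real n) * ln p / (p * (1 - \<alpha>))"
proof -
  have ps: "0 < p * (1 - \<alpha>)" using assms by simp
  have "ln (1 / \<epsilon>) \<le> ln p" using assms by (subst ln_le_cancel_iff) auto
  hence t1: "1 / (p * (1 - \<alpha>)) * ln (1 / \<epsilon>) \<le> 1 / (p * (1 - \<alpha>)) * ln p"
    using ps by (intro mult_left_mono) auto
  have "p * (1 - \<alpha>) \<le> p" using assms by (simp add: mult_left_le)
  moreover have "2 * p \<le> p * p" using assms by (intro mult_right_mono) auto
  ultimately have "p * (1 - \<alpha>) + 1 \<le> p\<^sup>2" using assms unfolding power2_eq_square by linarith
  hence "ln (p * (1 - \<alpha>) + 1) \<le> ln (p\<^sup>2)" using ps assms(1) by (subst ln_le_cancel_iff) auto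
  hence "ln (p * (1 - \<alpha>) + 1) \<le> 2 * ln p" using assms(1) by (simp add: ln_realpow)
  hence t2: "2 * real n / (p * (1 - \<alpha>)) * ln (p * (1 - \<alpha>) + 1)
      \<le> 2 * real n / (p * (1 - \<alpha>)) * (2 * ln p)"
    using ps by (intro mult_left_mono) auto
  have "1 / (p * (1 - \<alpha>)) * ln p + 2 * real n / (p * (1 - \<alpha>)) * (2 * ln p)
      = (1 + 4 * real n) * ln p / (p * (1 - \<alpha>))"
    using ps by (simp add: field_simps add_divide_distrib)
  with t1 t2 show ?thesis unfolding alpha_L_threshold_def by linarith
qed

lemma alpha_L_eq:
  "alpha_L n \<epsilon> p Phat Q0 =
     Sup ({0} \<union> {\<alpha> \<in> {0..<1}. alpha_L_threshold n \<epsilon> p \<alpha> \<le> Dstar Phat Q0 \<alpha>})"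
  by (simp add: alpha_L_def alpha_L_threshold_def)

lemma bdd_above_alpha_L_set:
  "bdd_above ({0} \<union> {\<alpha> \<in> {0..<1}. alpha_L_threshold n \<epsilon> p \<alpha> \<le> Dstar Phat Q0 \<alpha>})"
  by (rule bdd_aboveI[of _ 1]) auto

lemma alpha_L_nonneg: "0 \<le> alpha_L n \<epsilon> p Phat Q0"
  unfolding alpha_L_eq by (rule cSup_upper[OF _ bdd_above_alpha_L_set]) simp

lemma alpha_L_ge:
  assumes "0 \<le> \<alpha>" "\<alpha> < 1" "alpha_L_threshold n \<epsilon> p \<alpha> \<le> Dstar Phat Q0 \<alpha>"
  shows "\<alpha> \<le> alpha_L n \<epsilon> p Phat Q0"
  unfolding alpha_L_eq using assms by (intro cSup_upper[OF _ bdd_above_alpha_L_set]) auto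

lemma alpha_L_le_sep_dist:
  assumes "Phat \<in> simplex" "Q0 \<in> simplex" "\<forall>i. Q0 i > 0"
    and "0 < p" "0 < \<epsilon>" "\<epsilon> < 1"
  shows "alpha_L n \<epsilon> p Phat Q0 \<le> sep_dist Phat Q0"
  unfolding alpha_L_eq
proof (rule cSup_least)
  fix \<alpha> assume "\<alpha> \<in> {0} \<union> {\<alpha> \<in> {0..<1}. alpha_L_threshold n \<epsilon> p \<alpha> \<le> Dstar Phat Q0 \<alpha>}"
  moreover have False if "\<alpha> < 1" "sep_dist Phat Q0 \<le> \<alpha>"
      "alpha_L_threshold n \<epsilon> p \<alpha> \<le> Dstar Phat Q0 \<alpha>"
    using that Dstar_eq_0[OF assms(2,3)] alpha_L_threshold_pos[OF assms(4) _ assms(5,6)]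
    by (metis not_le)
  ultimately show "\<alpha> \<le> sep_dist Phat Q0"
    using sep_dist_nonneg[OF assms(1-3)] by force
qed simp

lemma sep_dist_le_alpha_L:
  assumes "Phat \<in> simplex" "Q0 \<in> simplex" "\<forall>i. Q0 i > 0" "0 < \<epsilon>"
    and i: "sep_dist Phat Q0 = 1 - Phat i / Q0 i"
    and p: "2 \<le> p" "1 / \<epsilon> \<le> p"
  shows "sep_dist Phat Q0 - sqrt (2 * (1 + 4 * real n) / Q0 i) * sqrt (ln p / p)
           \<le> alpha_L n \<epsilon> p Phat Q0"
proof -
  define \<kappa> where "\<kappa> = sep_dist Phat Q0"
  define \<delta> where "\<delta> = sqrt (2 * (1 + 4 * real n) / Q0 i) * sqrt (ln p / p)"
  define \<alpha> where "\<alpha> = \<kappa> - \<delta>"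
  have q: "0 < Q0 i" using assms(3) by simp
  have "0 < \<delta>" using q p by (simp add: \<delta>_def)
  have \<delta>2: "(1 + 4 * real n) * ln p / p = Q0 i * \<delta>\<^sup>2 / 2"
    using q p by (simp add: \<delta>_def power_mult_distrib) (simp add: field_simps)
  show ?thesis
  proof (cases "0 \<le> \<alpha>")
    case False
    thus ?thesis using alpha_L_nonneg[of n \<epsilon> p Phat Q0] by (simp add: \<alpha>_def \<kappa>_def \<delta>_def)
  next
    case True
    have "\<kappa> \<le> 1" using sep_dist_le_one[OF assms(1,3)] by (simp add: \<kappa>_def)
    hence \<alpha>1: "\<alpha> < 1" using \<open>0 < \<delta>\<close> by (simp add: \<alpha>_def)
    have "alpha_L_threshold n \<epsilon> p \<alpha> \<le> (1 + 4 * real n) * ln p / (p * (1 - \<alpha>))"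
      by (rule alpha_L_threshold_le[OF p assms(4) True \<alpha>1])
    also have "\<dots> = ((1 + 4 * real n) * ln p / p) / (1 - \<alpha>)" by simp
    also have "\<dots> = Q0 i * \<delta>\<^sup>2 / (2 * (1 - \<alpha>))" unfolding \<delta>2 by simp
    also have "\<dots> \<le> Q0 i * \<delta>\<^sup>2 / (2 * (1 - \<alpha>)\<^sup>2)"
    proof -
      have "(1 - \<alpha>)\<^sup>2 \<le> 1 - \<alpha>" using True \<alpha>1 by (simp add: power2_eq_square mult_left_le)
      with q \<alpha>1 show ?thesis by (intro divide_left_mono) auto
    qed
    also have "\<dots> \<le> Dstar Phat Q0 \<alpha>"
      using Dstar_ge[OF assms(1-3) True \<alpha>1, of i] i \<open>0 < \<delta>\<close> by (simp add: \<alpha>_def \<kappa>_def)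
    finally have "\<alpha> \<le> alpha_L n \<epsilon> p Phat Q0" by (rule alpha_L_ge[OF True \<alpha>1])
    thus ?thesis by (simp add: \<alpha>_def \<kappa>_def \<delta>_def)
  qed
qed

theorem theorem2:
  fixes Q0 Phat :: "'n::finite \<Rightarrow> real" and \<epsilon> :: real
  assumes "CARD('n) \<ge> 2"
    and "0 < \<epsilon>" and "\<epsilon> < 1"
    and "Q0 \<in> simplex" and "\<forall>i. Q0 i > 0"
    and "Phat \<in> simplex"
  shows "(\<lambda>p. sep_dist Phat Q0 - alpha_L CARD('n) \<epsilon> p Phat Q0)
           \<in> O[at_top](\<lambda>p. sqrt (ln p / p))"
proof -
  obtain i where i: "sep_dist Phat Q0 = 1 - Phat i / Q0 i" by (rule sep_dist_attained)
  define C where "C = sqrt (2 * (1 + 4 * real CARD('n)) / Q0 i)"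
  show ?thesis
  proof (rule bigoI[of _ C])
    show "\<forall>\<^sub>F p in at_top. norm (sep_dist Phat Q0 - alpha_L CARD('n) \<epsilon> p Phat Q0)
        \<le> C * norm (sqrt (ln p / p))"
      using eventually_ge_at_top[of "max 2 (1 / \<epsilon>)"]
    proof eventually_elim
      case (elim p)
      have "0 \<le> sep_dist Phat Q0 - alpha_L CARD('n) \<epsilon> p Phat Q0"
        using alpha_L_le_sep_dist[OF assms(6,4,5) _ assms(2,3)] elim by simp
      moreover have "sep_dist Phat Q0 - alpha_L CARD('n) \<epsilon> p Phat Q0 \<le> C * sqrt (ln p / p)"
        using sep_dist_le_alpha_L[OF assms(6,4,5,2) i, where n = "CARD('n)" and p = p] elim by (simp add: C_def)
      ultimately show ?case using elim by simp
    qed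
  qed
qed

end
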